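(* Let $R$ be a ring with identity, ${}_RM$ a finitely generated semisimple left $R$-module, $\varphi:M\to M$ a nilpotent $R$-endomorphism, and $\{x_{\gamma,i}\mid\gamma\in\Gamma,1\le i\le k_\gamma\}$ a nilpotent Jordan normal base of ${}_RM$ with respect to $\varphi$, with $\Gamma$ finite. Let $\Phi:(R[t])^\Gamma\to M$, $\Phi(\mathbf f)=\sum_{\gamma\in\Gamma}f_\gamma(t)\ast x_{\gamma,1}$, \[\mathcal M(\Phi)=\{\mathbf P\in M_{\Gamma\times\Gamma}(R[t])\mid \mathbf f\mathbf P\in\ker(\Phi)\text{ for all }\mathbf f\in\ker(\Phi)\},\] \[\mathcal V(k_\gamma,\gamma\in\Gamma)=\{\mathbf P=[p_{\delta,\gamma}(t)]\in M_{\Gamma\times\Gamma}(R[t])\mid \deg(p_{\delta,\gamma}(t))\le k_\gamma-1\text{ for all }\delta,\gamma\in\Gamma\}.\] If $\psi:M\to M$ is an $R$-endomorphism with $\psi\circ\varphi=\varphi\circ\psi$, then there exists $\mathbf P\in\mathcal M(\Phi)\cap\mathcal V(k_\gamma,\gamma\in\Gamma)$ such that $\psi(\Phi(\mathbf f))=\Phi(\mathbf f\mathbf P)$ for all $\mathbf f\in(R[t])^\Gamma$.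
   Context: A nilpotent Jordan normal base of ${}_RM$ with respect to $\varphi$ is a subset $\{x_{\gamma,i}\}$ (integers $k_\gamma\ge1$) such that each $Rx_{\gamma,i}$ is simple, $M=\bigoplus_{\gamma,i}Rx_{\gamma,i}$, $\varphi(x_{\gamma,i})=x_{\gamma,i+1}$ for $i<k_\gamma$, $\varphi(x_{\gamma,k_\gamma})=0$. $R[t]$ is the polynomial ring in a commuting indeterminate; $M$ is a left $R[t]$-module via $(a_1+a_2t+\cdots+a_{n+1}t^n)\ast u=a_1u+a_2\varphi(u)+\cdots+a_{n+1}\varphi^n(u)$. Elements of $(R[t])^\Gamma$ are $1\times\Gamma$ row vectors and $\mathbf f\mathbf P$ is the matrix product. *)

theory Defs
  imports "HOL-Computational_Algebra.Polynomial"
begin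

definition lmodule :: "('r::ring_1 \<Rightarrow> 'm::ab_group_add \<Rightarrow> 'm) \<Rightarrow> bool" where
  "lmodule smul \<longleftrightarrow>
     (\<forall>a x y. smul a (x + y) = smul a x + smul a y) \<and>
     (\<forall>a b x. smul (a + b) x = smul a x + smul b x) \<and>
     (\<forall>a b x. smul (a * b) x = smul a (smul b x)) \<and>
     (\<forall>x. smul 1 x = x)"

definition submodule :: "('r::ring_1 \<Rightarrow> 'm::ab_group_add \<Rightarrow> 'm) \<Rightarrow> 'm set \<Rightarrow> bool" where
  "submodule smul N \<longleftrightarrow> 0 \<in> N \<and> (\<forall>x\<in>N. \<forall>y\<in>N. x + y \<in> N) \<and> (\<forall>a. \<forall>x\<in>N. smul a x \<in> N)"

definition simple_submodule :: "('r::ring_1 \<Rightarrow> 'm::ab_group_add \<Rightarrow> 'm) \<Rightarrow> 'm set \<Rightarrow> bool" where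
  "simple_submodule smul N \<longleftrightarrow> submodule smul N \<and> N \<noteq> {0} \<and>
     (\<forall>K. submodule smul K \<and> K \<subseteq> N \<longrightarrow> K = {0} \<or> K = N)"

definition cyclic :: "('r::ring_1 \<Rightarrow> 'm::ab_group_add \<Rightarrow> 'm) \<Rightarrow> 'm \<Rightarrow> 'm set" where
  "cyclic smul x = range (\<lambda>a. smul a x)"

definition mspan :: "('r::ring_1 \<Rightarrow> 'm::ab_group_add \<Rightarrow> 'm) \<Rightarrow> 'm set \<Rightarrow> 'm set" where
  "mspan smul G = \<Inter>{N. submodule smul N \<and> G \<subseteq> N}"

definition fin_gen :: "('r::ring_1 \<Rightarrow> 'm::ab_group_add \<Rightarrow> 'm) \<Rightarrow> bool" where
  "fin_gen smul \<longleftrightarrow> (\<exists>G. finite G \<and> mspan smul G = UNIV)"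

definition semisimple :: "('r::ring_1 \<Rightarrow> 'm::ab_group_add \<Rightarrow> 'm) \<Rightarrow> bool" where
  "semisimple smul \<longleftrightarrow> mspan smul (\<Union>{N. simple_submodule smul N}) = UNIV"

definition lendo :: "('r::ring_1 \<Rightarrow> 'm::ab_group_add \<Rightarrow> 'm) \<Rightarrow> ('m \<Rightarrow> 'm) \<Rightarrow> bool" where
  "lendo smul f \<longleftrightarrow> (\<forall>x y. f (x + y) = f x + f y) \<and> (\<forall>a x. f (smul a x) = smul a (f x))"

definition nilpotent_map :: "('m::ab_group_add \<Rightarrow> 'm) \<Rightarrow> bool" where
  "nilpotent_map f \<longleftrightarrow> (\<exists>n. \<forall>x. (f ^^ n) x = 0)"

definition jidx :: "'g set \<Rightarrow> ('g \<Rightarrow> nat) \<Rightarrow> ('g \<times> nat) set" where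
  "jidx \<Gamma> k = Sigma \<Gamma> (\<lambda>g. {1..k g})"

definition nil_jordan_base ::
  "('r::ring_1 \<Rightarrow> 'm::ab_group_add \<Rightarrow> 'm) \<Rightarrow> ('m \<Rightarrow> 'm) \<Rightarrow> 'g set \<Rightarrow> ('g \<Rightarrow> nat)
     \<Rightarrow> ('g \<Rightarrow> nat \<Rightarrow> 'm) \<Rightarrow> bool" where
  "nil_jordan_base smul \<phi> \<Gamma> k x \<longleftrightarrow>
     (\<forall>g\<in>\<Gamma>. k g \<ge> 1) \<and>
     (\<forall>(g,i)\<in>jidx \<Gamma> k. simple_submodule smul (cyclic smul (x g i))) \<and>
     (\<forall>m. \<exists>!c. (\<forall>g i. (g,i) \<in> jidx \<Gamma> k \<longrightarrow> c g i \<in> cyclic smul (x g i)) \<and>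
               (\<forall>g i. (g,i) \<notin> jidx \<Gamma> k \<longrightarrow> c g i = 0) \<and>
               m = (\<Sum>(g,i)\<in>jidx \<Gamma> k. c g i)) \<and>
     (\<forall>g\<in>\<Gamma>. \<forall>i. 1 \<le> i \<and> i < k g \<longrightarrow> \<phi> (x g i) = x g (Suc i)) \<and>
     (\<forall>g\<in>\<Gamma>. \<phi> (x g (k g)) = 0)"

text \<open>The R[t]-action on M: (a_0 + a_1 t + ... + a_n t^n) * u = sum a_j phi^j(u).\<close>
definition pact :: "('r::ring_1 \<Rightarrow> 'm::ab_group_add \<Rightarrow> 'm) \<Rightarrow> ('m \<Rightarrow> 'm) \<Rightarrow> 'r poly \<Rightarrow> 'm \<Rightarrow> 'm" where
  "pact smul \<phi> f u = (\<Sum>j\<le>degree f. smul (coeff f j) ((\<phi> ^^ j) u))"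

text \<open>Multiplication in R[t] (t commutes with R, R possibly noncommutative).\<close>
definition ncmult :: "'r::ring_1 poly \<Rightarrow> 'r poly \<Rightarrow> 'r poly" where
  "ncmult p q = (\<Sum>i\<le>degree p. \<Sum>j\<le>degree q. monom (coeff p i * coeff q j) (i + j))"

definition vecmat :: "'g set \<Rightarrow> ('g \<Rightarrow> 'r::ring_1 poly) \<Rightarrow> ('g \<Rightarrow> 'g \<Rightarrow> 'r poly) \<Rightarrow> 'g \<Rightarrow> 'r poly" where
  "vecmat \<Gamma> f P = (\<lambda>g. \<Sum>d\<in>\<Gamma>. ncmult (f d) (P d g))"

definition PhiMap :: "('r::ring_1 \<Rightarrow> 'm::ab_group_add \<Rightarrow> 'm) \<Rightarrow> ('m \<Rightarrow> 'm) \<Rightarrow> 'g set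
     \<Rightarrow> ('g \<Rightarrow> nat \<Rightarrow> 'm) \<Rightarrow> ('g \<Rightarrow> 'r poly) \<Rightarrow> 'm" where
  "PhiMap smul \<phi> \<Gamma> x f = (\<Sum>g\<in>\<Gamma>. pact smul \<phi> (f g) (x g 1))"

definition MPhi :: "('r::ring_1 \<Rightarrow> 'm::ab_group_add \<Rightarrow> 'm) \<Rightarrow> ('m \<Rightarrow> 'm) \<Rightarrow> 'g set
     \<Rightarrow> ('g \<Rightarrow> nat \<Rightarrow> 'm) \<Rightarrow> ('g \<Rightarrow> 'g \<Rightarrow> 'r poly) set" where
  "MPhi smul \<phi> \<Gamma> x = {P. \<forall>f. PhiMap smul \<phi> \<Gamma> x f = 0 \<longrightarrow> PhiMap smul \<phi> \<Gamma> x (vecmat \<Gamma> f P) = 0}"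

definition VSet :: "'g set \<Rightarrow> ('g \<Rightarrow> nat) \<Rightarrow> ('g \<Rightarrow> 'g \<Rightarrow> 'r::ring_1 poly) set" where
  "VSet \<Gamma> k = {P. \<forall>d\<in>\<Gamma>. \<forall>g\<in>\<Gamma>. degree (P d g) \<le> k g - 1}"

end

theory Submission
  imports Defs
begin

text \<open>Since \<open>x\<^sub>\<gamma>\<^sub>,\<^sub>i = \<phi>\<^sup>i\<^sup>-\<^sup>1(x\<^sub>\<gamma>\<^sub>,\<^sub>1)\<close> and the base decomposes \<open>M\<close> into the cyclic modules
  \<open>Rx\<^sub>\<gamma>\<^sub>,\<^sub>i\<close>, every element of \<open>M\<close> is \<open>\<Phi>(q)\<close> for a row \<open>q\<close> with \<open>deg q\<^sub>\<gamma> \<le> k\<^sub>\<gamma> - 1\<close>.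
  Take for \<open>P\<close> the matrix whose row \<open>P\<^sub>\<delta>\<close> satisfies \<open>\<psi>(x\<^sub>\<delta>\<^sub>,\<^sub>1) = \<Phi>(P\<^sub>\<delta>)\<close>. As \<open>\<Phi>\<close> is
  \<open>R[t]\<close>-linear and \<open>\<psi>\<close> commutes with the \<open>R[t]\<close>-action,
  \<open>\<psi>(\<Phi>(f)) = \<Sigma>\<^sub>\<delta> f\<^sub>\<delta> * \<psi>(x\<^sub>\<delta>\<^sub>,\<^sub>1) = \<Sigma>\<^sub>\<delta> f\<^sub>\<delta> * \<Phi>(P\<^sub>\<delta>) = \<Phi>(fP)\<close>, and \<open>P\<close> preserves \<open>ker \<Phi>\<close>
  because \<open>\<psi>(0) = 0\<close>.\<close>

lemma lmodule_smul_zero_left: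
  assumes "lmodule smul" shows "smul 0 v = 0"
proof -
  have "smul (0 + 0) v = smul 0 v + smul 0 v" using assms unfolding lmodule_def by blast
  then show ?thesis by simp
qed

lemma lmodule_smul_zero_right:
  assumes "lmodule smul" shows "smul a 0 = 0"
proof -
  have "smul a (0 + 0) = smul a 0 + smul a 0" using assms unfolding lmodule_def by blast
  then show ?thesis by simp
qed

lemma lmodule_smul_sum:
  assumes "lmodule smul" shows "smul a (sum f A) = (\<Sum>i\<in>A. smul a (f i))"
proof (cases "finite A")
  case True then show ?thesis
    by (induction A rule: finite_induct)
       (use assms in \<open>auto simp: lmodule_smul_zero_right lmodule_def\<close>)
qed (simp add: lmodule_smul_zero_right[OF assms])

lemma lendo_zero:
  assumes "lendo smul f" shows "f 0 = 0"
proof -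
  have "f (0 + 0) = f 0 + f 0" using assms unfolding lendo_def by blast
  then show ?thesis by simp
qed

lemma lendo_sum:
  assumes "lendo smul f" shows "f (sum g A) = (\<Sum>i\<in>A. f (g i))"
proof (cases "finite A")
  case True then show ?thesis
    by (induction A rule: finite_induct) (use assms in \<open>auto simp: lendo_zero lendo_def\<close>)
qed (simp add: lendo_zero[OF assms])

lemma lendo_funpow:
  assumes "lendo smul f" shows "lendo smul (f ^^ n)"
  by (induction n) (use assms in \<open>auto simp: lendo_def\<close>)

lemma pact_conv_sum_lessThan:
  assumes "lmodule smul" "degree f < N"
  shows "pact smul \<phi> f u = (\<Sum>j<N. smul (coeff f j) ((\<phi> ^^ j) u))"
  unfolding pact_def
  by (rule sum.mono_neutral_left)
     (use assms in \<open>auto simp: coeff_eq_0 lmodule_smul_zero_left\<close>)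

lemma pact_0:
  assumes "lmodule smul" shows "pact smul \<phi> 0 u = 0"
  unfolding pact_def by (simp add: lmodule_smul_zero_left[OF assms])

lemma pact_add:
  assumes "lmodule smul"
  shows "pact smul \<phi> (f + g) u = pact smul \<phi> f u + pact smul \<phi> g u"
proof -
  define N where "N = Suc (max (degree f) (degree g))"
  have "degree (f + g) < N" "degree f < N" "degree g < N"
    using degree_add_le_max[of f g] by (auto simp: N_def)
  with assms show ?thesis
    by (simp add: pact_conv_sum_lessThan lmodule_def sum.distrib)
qed

lemma pact_sum:
  assumes "lmodule smul"
  shows "pact smul \<phi> (sum F A) u = (\<Sum>i\<in>A. pact smul \<phi> (F i) u)"
proof (cases "finite A")
  case True then show ?thesis
    by (induction A rule: finite_induct) (simp_all add: pact_0[OF assms] pact_add[OF assms])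
qed (simp add: pact_0[OF assms])

lemma pact_monom:
  assumes "lmodule smul"
  shows "pact smul \<phi> (monom a n) u = smul a ((\<phi> ^^ n) u)"
proof -
  have "degree (monom a n) < Suc n" using degree_monom_le[of a n] by simp
  then have "pact smul \<phi> (monom a n) u = (\<Sum>j<Suc n. smul (coeff (monom a n) j) ((\<phi> ^^ j) u))"
    by (rule pact_conv_sum_lessThan[OF assms])
  also have "\<dots> = (\<Sum>j<Suc n. if j = n then smul a ((\<phi> ^^ j) u) else 0)"
    by (rule sum.cong) (auto simp: coeff_monom lmodule_smul_zero_left[OF assms])
  finally show ?thesis by simp
qed

lemma pact_sum_right:
  assumes "lmodule smul" "lendo smul \<phi>"
  shows "pact smul \<phi> f (sum U A) = (\<Sum>i\<in>A. pact smul \<phi> f (U i))"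
  unfolding pact_def
  by (simp add: lendo_sum[OF lendo_funpow[OF assms(2)]] lmodule_smul_sum[OF assms(1)])
     (rule sum.swap)

lemma pact_ncmult:
  assumes "lmodule smul" "lendo smul \<phi>"
  shows "pact smul \<phi> (ncmult p q) u = pact smul \<phi> p (pact smul \<phi> q u)"
proof -
  have "pact smul \<phi> (ncmult p q) u =
      (\<Sum>i\<le>degree p. \<Sum>j\<le>degree q. smul (coeff p i * coeff q j) ((\<phi> ^^ (i + j)) u))"
    unfolding ncmult_def by (simp add: pact_sum[OF assms(1)] pact_monom[OF assms(1)])
  also have "\<dots> = (\<Sum>i\<le>degree p. \<Sum>j\<le>degree q.
      smul (coeff p i) ((\<phi> ^^ i) (smul (coeff q j) ((\<phi> ^^ j) u))))"
    using assms lendo_funpow[OF assms(2)] by (simp add: lmodule_def lendo_def funpow_add)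
  also have "\<dots> = pact smul \<phi> p (pact smul \<phi> q u)"
    unfolding pact_def
    by (simp add: lendo_sum[OF lendo_funpow[OF assms(2)]] lmodule_smul_sum[OF assms(1)])
  finally show ?thesis .
qed

lemma comp_commute_funpow:
  assumes "\<psi> \<circ> \<phi> = \<phi> \<circ> \<psi>"
  shows "\<psi> ((\<phi> ^^ j) v) = (\<phi> ^^ j) (\<psi> v)"
proof (induction j)
  case (Suc j)
  have "\<psi> (\<phi> ((\<phi> ^^ j) v)) = \<phi> (\<psi> ((\<phi> ^^ j) v))" using fun_cong[OF assms] by simp
  with Suc show ?case by simp
qed simp

lemma lendo_pact_commute:
  assumes "lendo smul \<psi>" "\<psi> \<circ> \<phi> = \<phi> \<circ> \<psi>"
  shows "\<psi> (pact smul \<phi> f u) = pact smul \<phi> f (\<psi> u)"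
  unfolding pact_def using assms(1)
  by (simp add: lendo_sum[OF assms(1)] comp_commute_funpow[OF assms(2)] lendo_def)

lemma PhiMap_vecmat:
  assumes "lmodule smul" "lendo smul \<phi>"
  shows "PhiMap smul \<phi> \<Gamma> x (vecmat \<Gamma> f P) =
    (\<Sum>d\<in>\<Gamma>. pact smul \<phi> (f d) (PhiMap smul \<phi> \<Gamma> x (P d)))"
proof -
  have "PhiMap smul \<phi> \<Gamma> x (vecmat \<Gamma> f P) =
      (\<Sum>g\<in>\<Gamma>. \<Sum>d\<in>\<Gamma>. pact smul \<phi> (f d) (pact smul \<phi> (P d g) (x g 1)))"
    unfolding PhiMap_def vecmat_def by (simp add: pact_sum[OF assms(1)] pact_ncmult[OF assms])
  also have "\<dots> = (\<Sum>d\<in>\<Gamma>. \<Sum>g\<in>\<Gamma>. pact smul \<phi> (f d) (pact smul \<phi> (P d g) (x g 1)))"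
    by (rule sum.swap)
  finally show ?thesis
    unfolding PhiMap_def pact_sum_right[OF assms] .
qed

lemma lendo_PhiMap_commute:
  assumes "lendo smul \<psi>" "\<psi> \<circ> \<phi> = \<phi> \<circ> \<psi>"
  shows "\<psi> (PhiMap smul \<phi> \<Gamma> x f) = (\<Sum>d\<in>\<Gamma>. pact smul \<phi> (f d) (\<psi> (x d 1)))"
  unfolding PhiMap_def lendo_sum[OF assms(1)] lendo_pact_commute[OF assms] ..

lemma nil_jordan_base_funpow:
  assumes "nil_jordan_base smul \<phi> \<Gamma> k x" "g \<in> \<Gamma>" "1 \<le> i" "i \<le> k g"
  shows "x g i = (\<phi> ^^ (i - 1)) (x g 1)"
  using assms(3,4)
proof (induction i)
  case (Suc i)
  show ?case
  proof (cases "i = 0")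
    case False
    then have "x g (Suc i) = \<phi> (x g i)"
      using assms(1,2) Suc.prems unfolding nil_jordan_base_def by auto
    with Suc False show ?thesis by (cases i) auto
  qed simp
qed simp

lemma nil_jordan_base_PhiMap_surj:
  assumes "lmodule smul" "finite \<Gamma>" "nil_jordan_base smul \<phi> \<Gamma> k x"
  obtains q where "\<forall>g\<in>\<Gamma>. degree (q g) \<le> k g - 1" "m = PhiMap smul \<phi> \<Gamma> x q"
proof -
  obtain c where c: "\<forall>g i. (g, i) \<in> jidx \<Gamma> k \<longrightarrow> c g i \<in> cyclic smul (x g i)"
      "m = (\<Sum>(g, i)\<in>jidx \<Gamma> k. c g i)"
    using assms(3) unfolding nil_jordan_base_def by metis
  have "\<forall>g i. \<exists>a. (g, i) \<in> jidx \<Gamma> k \<longrightarrow> c g i = smul a (x g i)"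
    using c(1) unfolding cyclic_def by blast
  then obtain a where a: "\<And>g i. (g, i) \<in> jidx \<Gamma> k \<Longrightarrow> c g i = smul (a g i) (x g i)"
    by metis
  define q where "q g = (\<Sum>i\<in>{1..k g}. monom (a g i) (i - 1))" for g
  have "degree (q g) \<le> k g - 1" for g
    by (rule degree_le) (auto simp: q_def coeff_sum coeff_monom intro!: sum.neutral)
  moreover have "m = PhiMap smul \<phi> \<Gamma> x q"
  proof -
    have "m = (\<Sum>g\<in>\<Gamma>. \<Sum>i\<in>{1..k g}. c g i)"
      unfolding c(2) jidx_def using sum.Sigma[OF assms(2), of "\<lambda>g. {1..k g}" c] by simp
    also have "\<dots> = (\<Sum>g\<in>\<Gamma>. \<Sum>i\<in>{1..k g}. smul (a g i) ((\<phi> ^^ (i - 1)) (x g 1)))"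
    proof (intro sum.cong refl)
      fix g i assume "g \<in> \<Gamma>" "i \<in> {1..k g}"
      then show "c g i = smul (a g i) ((\<phi> ^^ (i - 1)) (x g 1))"
        using a[of g i] nil_jordan_base_funpow[OF assms(3), of g i] by (simp add: jidx_def)
    qed
    also have "\<dots> = PhiMap smul \<phi> \<Gamma> x q"
      unfolding PhiMap_def q_def pact_sum[OF assms(1)] pact_monom[OF assms(1)] ..
    finally show ?thesis .
  qed
  ultimately show ?thesis using that by blast
qed

lemma vecmat_in_MPhi:
  assumes "lendo smul \<psi>"
    and "\<And>f. \<psi> (PhiMap smul \<phi> \<Gamma> x f) = PhiMap smul \<phi> \<Gamma> x (vecmat \<Gamma> f P)"
  shows "P \<in> MPhi smul \<phi> \<Gamma> x"
  unfolding MPhi_def using lendo_zero[OF assms(1)] by (simp flip: assms(2))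

theorem lemma4p3:
  fixes smul :: "'r::ring_1 \<Rightarrow> 'm::ab_group_add \<Rightarrow> 'm"
    and \<phi> \<psi> :: "'m \<Rightarrow> 'm"
    and \<Gamma> :: "'g set" and k :: "'g \<Rightarrow> nat" and x :: "'g \<Rightarrow> nat \<Rightarrow> 'm"
  assumes "lmodule smul"
    and "fin_gen smul"
    and "semisimple smul"
    and "lendo smul \<phi>"
    and "nilpotent_map \<phi>"
    and "finite \<Gamma>"
    and "nil_jordan_base smul \<phi> \<Gamma> k x"
    and "lendo smul \<psi>"
    and "\<psi> \<circ> \<phi> = \<phi> \<circ> \<psi>"
  shows "\<exists>P \<in> MPhi smul \<phi> \<Gamma> x \<inter> VSet \<Gamma> k.
           \<forall>f. \<psi> (PhiMap smul \<phi> \<Gamma> x f) = PhiMap smul \<phi> \<Gamma> x (vecmat \<Gamma> f P)"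
proof -
  have "\<forall>d. \<exists>q. (\<forall>g\<in>\<Gamma>. degree (q g) \<le> k g - 1) \<and> \<psi> (x d 1) = PhiMap smul \<phi> \<Gamma> x q"
    using nil_jordan_base_PhiMap_surj[OF assms(1,6,7)] by metis
  then obtain P where deg: "\<And>d. \<forall>g\<in>\<Gamma>. degree (P d g) \<le> k g - 1"
    and rows: "\<And>d. \<psi> (x d 1) = PhiMap smul \<phi> \<Gamma> x (P d)"
    by metis
  have represents: "\<psi> (PhiMap smul \<phi> \<Gamma> x f) = PhiMap smul \<phi> \<Gamma> x (vecmat \<Gamma> f P)" for f
    unfolding lendo_PhiMap_commute[OF assms(8,9)] PhiMap_vecmat[OF assms(1,4)] rows ..
  then have "P \<in> MPhi smul \<phi> \<Gamma> x"
    by (rule vecmat_in_MPhi[OF assms(8)])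
  moreover have "P \<in> VSet \<Gamma> k"
    unfolding VSet_def using deg by blast
  ultimately show ?thesis using represents by blast
qed

end
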